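(* For any integers $n \ge k \ge 1$ and any positive integers $n_1 \le n_2 \le \cdots \le n_k$ with $n_1 + \cdots + n_k = n$, the graph $G(n_1,\ldots,n_k)$ has exactly $kn - \binom{k+1}{2}$ edges.
   Context: The graph $G(n_1,\ldots,n_k)$: for each $1 \le i \le k$ it contains a path on distinct vertices $v_{i,1},\ldots,v_{i,n_i}$ (edges $v_{i,a}v_{i,a+1}$ for $1 \le a < n_i$), with all $n$ vertices distinct, and additionally, for each $1 \le i < j \le k$, the following edges: (i) if $n_i > 1$, the edge $v_{i,a}v_{j,a}$ for each $1 \le a < n_i$; (ii) if $n_j > 1$, the edge $v_{i,a+1}v_{j,a}$ for each $1 \le a < n_i$; (iii) the edge $v_{i,n_i}v_{j,a}$ for each $n_i \le a \le n_j$. These are all the edges. *)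

theory Defs
  imports Main
begin

text \<open>The sizes are given by a function ns on indices 1..k.
  Vertex v_{i,a} is the pair (i,a) with 1 \<le> i \<le> k, 1 \<le> a \<le> ns i.\<close>

definition G_vertices :: "nat \<Rightarrow> (nat \<Rightarrow> nat) \<Rightarrow> (nat \<times> nat) set" where
  "G_vertices k ns = {(i, a) | i a. 1 \<le> i \<and> i \<le> k \<and> 1 \<le> a \<and> a \<le> ns i}"

definition G_edges :: "nat \<Rightarrow> (nat \<Rightarrow> nat) \<Rightarrow> (nat \<times> nat) set set" where
  "G_edges k ns =
     {{(i, a), (i, a + 1)} | i a. 1 \<le> i \<and> i \<le> k \<and> 1 \<le> a \<and> a < ns i}
   \<union> {{(i, a), (j, a)} | i j a. 1 \<le> i \<and> i < j \<and> j \<le> k \<and> ns i > 1 \<and> 1 \<le> a \<and> a < ns i}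
   \<union> {{(i, a + 1), (j, a)} | i j a. 1 \<le> i \<and> i < j \<and> j \<le> k \<and> ns j > 1 \<and> 1 \<le> a \<and> a < ns i}
   \<union> {{(i, ns i), (j, a)} | i j a. 1 \<le> i \<and> i < j \<and> j \<le> k \<and> ns i \<le> a \<and> a \<le> ns j}"

end

theory Submission
  imports Defs
begin

text \<open>Sort the edges by the largest path index \<open>j\<close> among their endpoints. Layer \<open>j\<close>
  consists of the \<open>n\<^sub>j - 1\<close> edges of path \<open>j\<close> and, for each \<open>i < j\<close>, of
  \<open>(n\<^sub>i - 1) + (n\<^sub>i - 1) + (n\<^sub>j - n\<^sub>i + 1) = n\<^sub>i + n\<^sub>j - 1\<close> edges between paths \<open>i\<close> and \<open>j\<close>;
  the last count needs \<open>n\<^sub>i \<le> n\<^sub>j\<close>. Summing over the layers, every \<open>n\<^sub>i\<close> is counted \<open>k\<close> times,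
  and layer \<open>j\<close> contributes \<open>j\<close> of the \<open>-1\<close> terms, which add up to \<open>(k+1) choose 2\<close>.\<close>

definition path_edges :: "(nat \<Rightarrow> nat) \<Rightarrow> nat \<Rightarrow> (nat \<times> nat) set set" where
  "path_edges ns j = (\<lambda>a. {(j, a), (j, a + 1)}) ` {1..<ns j}"

definition cross_edges :: "(nat \<Rightarrow> nat) \<Rightarrow> nat \<Rightarrow> nat \<Rightarrow> (nat \<times> nat) set set" where
  "cross_edges ns i j =
     (\<lambda>a. {(i, a), (j, a)}) ` {1..<ns i}
   \<union> (\<lambda>a. {(i, a + 1), (j, a)}) ` {1..<ns i}
   \<union> (\<lambda>a. {(i, ns i), (j, a)}) ` {ns i..ns j}"

definition layer_edges :: "(nat \<Rightarrow> nat) \<Rightarrow> nat \<Rightarrow> (nat \<times> nat) set set" where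
  "layer_edges ns j = path_edges ns j \<union> (\<Union>i\<in>{1..<j}. cross_edges ns i j)"

lemma fst_path_edges: "e \<in> path_edges ns j \<Longrightarrow> fst ` e = {j}"
  unfolding path_edges_def by auto

lemma fst_cross_edges: "e \<in> cross_edges ns i j \<Longrightarrow> fst ` e = {i, j}"
  unfolding cross_edges_def by auto

lemma fst_layer_edges:
  assumes "e \<in> layer_edges ns j"
  shows "j \<in> fst ` e" and "fst ` e \<subseteq> {..j}"
proof -
  from assms consider "e \<in> path_edges ns j" | i where "i < j" "e \<in> cross_edges ns i j"
    unfolding layer_edges_def by auto
  then show "j \<in> fst ` e" "fst ` e \<subseteq> {..j}"
    by (cases; simp add: fst_path_edges fst_cross_edges)+
qed

lemma finite_layer_edges: "finite (layer_edges ns j)"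
  unfolding layer_edges_def path_edges_def cross_edges_def by auto

lemma card_path_edges: "card (path_edges ns j) = ns j - 1"
  unfolding path_edges_def by (subst card_image) (auto simp: inj_on_def doubleton_eq_iff)

lemma card_cross_edges:
  assumes "i \<noteq> j" and "1 \<le> ns i" and "ns i \<le> ns j"
  shows "card (cross_edges ns i j) + 1 = ns i + ns j"
proof -
  let ?A = "(\<lambda>a. {(i, a), (j, a)}) ` {1..<ns i}"
  let ?B = "(\<lambda>a. {(i, a + 1), (j, a)}) ` {1..<ns i}"
  let ?C = "(\<lambda>a. {(i, ns i), (j, a)}) ` {ns i..ns j}"
  have "card ?A = ns i - 1" "card ?B = ns i - 1" "card ?C = ns j + 1 - ns i"
    using \<open>i \<noteq> j\<close> by (subst card_image; auto simp: inj_on_def doubleton_eq_iff)+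
  moreover have "?A \<inter> ?B = {}" "(?A \<union> ?B) \<inter> ?C = {}"
    using \<open>i \<noteq> j\<close> by (auto simp: doubleton_eq_iff)
  ultimately show ?thesis
    unfolding cross_edges_def using assms by (simp add: card_Un_disjoint)
qed

lemma card_layer_edges_eq_sum:
  "card (layer_edges ns j) = (ns j - 1) + (\<Sum>i = 1..<j. card (cross_edges ns i j))"
proof -
  let ?X = "\<Union>i\<in>{1..<j}. cross_edges ns i j"
  have "card ?X = (\<Sum>i = 1..<j. card (cross_edges ns i j))"
  proof (rule card_UN_disjoint)
    show "\<forall>i\<in>{1..<j}. finite (cross_edges ns i j)"
      unfolding cross_edges_def by auto
    show "\<forall>i\<in>{1..<j}. \<forall>i'\<in>{1..<j}. i \<noteq> i' \<longrightarrow> cross_edges ns i j \<inter> cross_edges ns i' j = {}"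
    proof (intro ballI impI equals0I)
      fix i i' e
      assume "i \<in> {1..<j}" "i' \<in> {1..<j}" "i \<noteq> i'"
        and "e \<in> cross_edges ns i j \<inter> cross_edges ns i' j"
      then have "{i, j} = {i', j}" "i \<noteq> j" "i' \<noteq> j"
        using fst_cross_edges[of e ns i j] fst_cross_edges[of e ns i' j] by auto
      then show False
        using \<open>i \<noteq> i'\<close> by (auto simp: doubleton_eq_iff)
    qed
  qed simp
  moreover have "path_edges ns j \<inter> ?X = {}"
    using fst_path_edges fst_cross_edges by fastforce
  moreover have "finite (path_edges ns j)" "finite ?X"
    using finite_layer_edges[of ns j] unfolding layer_edges_def by auto
  ultimately show ?thesis
    unfolding layer_edges_def by (simp add: card_Un_disjoint card_path_edges)
qed

lemma card_layer_edges:
  assumes "1 \<le> j" and "1 \<le> ns j" and "\<forall>i\<in>{1..<j}. 1 \<le> ns i \<and> ns i \<le> ns j"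
  shows "card (layer_edges ns j) + j = (\<Sum>i = 1..<j. ns i) + j * ns j"
proof -
  have "(\<Sum>i = 1..<j. card (cross_edges ns i j)) + (j - 1)
      = (\<Sum>i = 1..<j. card (cross_edges ns i j) + 1)"
    unfolding sum.distrib by simp
  also have "\<dots> = (\<Sum>i = 1..<j. ns i) + (j - 1) * ns j"
    using assms(3) card_cross_edges by (simp add: sum.distrib)
  moreover have "j * ns j = ns j + (j - 1) * ns j"
    using assms(1) by (cases j) auto
  ultimately show ?thesis
    using card_layer_edges_eq_sum[of ns j] assms(1,2) by linarith
qed

lemma path_edge_in_G_edges:
  assumes "1 \<le> i" and "i \<le> k" and "1 \<le> a" and "a < ns i"
  shows "{(i, a), (i, a + 1)} \<in> G_edges k ns"
  unfolding G_edges_def using assms by blast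

lemma straight_edge_in_G_edges:
  assumes "1 \<le> i" and "i < j" and "j \<le> k" and "1 \<le> a" and "a < ns i"
  shows "{(i, a), (j, a)} \<in> G_edges k ns"
proof -
  have "ns i > 1" using assms by simp
  then show ?thesis unfolding G_edges_def using assms by blast
qed

lemma diagonal_edge_in_G_edges:
  assumes "1 \<le> i" and "i < j" and "j \<le> k" and "1 \<le> a" and "a < ns i" and "ns i \<le> ns j"
  shows "{(i, a + 1), (j, a)} \<in> G_edges k ns"
proof -
  have "ns j > 1" using assms by simp
  then show ?thesis unfolding G_edges_def using assms by blast
qed

lemma end_edge_in_G_edges:
  assumes "1 \<le> i" and "i < j" and "j \<le> k" and "ns i \<le> a" and "a \<le> ns j"
  shows "{(i, ns i), (j, a)} \<in> G_edges k ns"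
  unfolding G_edges_def using assms by blast

lemma path_edges_subset_G_edges:
  "1 \<le> j \<Longrightarrow> j \<le> k \<Longrightarrow> path_edges ns j \<subseteq> G_edges k ns"
  unfolding path_edges_def by (intro image_subsetI path_edge_in_G_edges) auto

lemma cross_edges_subset_G_edges:
  assumes "1 \<le> i" and "i < j" and "j \<le> k" and "ns i \<le> ns j"
  shows "cross_edges ns i j \<subseteq> G_edges k ns"
  unfolding cross_edges_def using assms
  by (intro Un_least image_subsetI straight_edge_in_G_edges diagonal_edge_in_G_edges
      end_edge_in_G_edges) auto

lemma G_edges_subset_UN_layer_edges:
  "G_edges k ns \<subseteq> (\<Union>j\<in>{1..k}. layer_edges ns j)"
proof
  fix e assume "e \<in> G_edges k ns"
  then consider
      (path) j a where "e = {(j, a), (j, a + 1)}" "1 \<le> j" "j \<le> k" "1 \<le> a" "a < ns j"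
    | (straight) i j a where "e = {(i, a), (j, a)}" "1 \<le> i" "i < j" "j \<le> k" "1 \<le> a" "a < ns i"
    | (diagonal) i j a where "e = {(i, a + 1), (j, a)}" "1 \<le> i" "i < j" "j \<le> k" "1 \<le> a" "a < ns i"
    | (from_end) i j a where "e = {(i, ns i), (j, a)}" "1 \<le> i" "i < j" "j \<le> k" "ns i \<le> a" "a \<le> ns j"
    unfolding G_edges_def by blast
  then show "e \<in> (\<Union>j\<in>{1..k}. layer_edges ns j)"
  proof cases
    case path
    then have "e \<in> path_edges ns j"
      unfolding path_edges_def by (intro image_eqI[where x = a]) auto
    with path show ?thesis
      unfolding layer_edges_def by auto
  next
    case straight
    then have "e \<in> cross_edges ns i j"
      unfolding cross_edges_def by (intro UnI1[OF UnI1] image_eqI[where x = a]) auto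
    with straight show ?thesis
      unfolding layer_edges_def by auto
  next
    case diagonal
    then have "e \<in> cross_edges ns i j"
      unfolding cross_edges_def by (intro UnI1[OF UnI2] image_eqI[where x = a]) auto
    with diagonal show ?thesis
      unfolding layer_edges_def by auto
  next
    case from_end
    then have "e \<in> cross_edges ns i j"
      unfolding cross_edges_def by (intro UnI2 image_eqI[where x = a]) auto
    with from_end show ?thesis
      unfolding layer_edges_def by auto
  qed
qed

lemma G_edges_eq_UN_layer_edges:
  assumes "\<forall>i j. 1 \<le> i \<and> i \<le> j \<and> j \<le> k \<longrightarrow> ns i \<le> ns j"
  shows "G_edges k ns = (\<Union>j\<in>{1..k}. layer_edges ns j)"
proof
  show "(\<Union>j\<in>{1..k}. layer_edges ns j) \<subseteq> G_edges k ns"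
    unfolding layer_edges_def
  proof (intro UN_least Un_least)
    fix j assume "j \<in> {1..k}"
    then show "path_edges ns j \<subseteq> G_edges k ns"
      by (simp add: path_edges_subset_G_edges)
    fix i assume "i \<in> {1..<j}"
    with \<open>j \<in> {1..k}\<close> assms show "cross_edges ns i j \<subseteq> G_edges k ns"
      by (intro cross_edges_subset_G_edges) auto
  qed
qed (rule G_edges_subset_UN_layer_edges)

lemma sum_prefix_sums_plus_weighted:
  fixes f :: "nat \<Rightarrow> 'a::comm_semiring_1"
  shows "(\<Sum>j = 1..k. (\<Sum>i = 1..<j. f i) + of_nat j * f j) = of_nat k * (\<Sum>i = 1..k. f i)"
proof (induction k)
  case (Suc k)
  have "(\<Sum>i = 1..<Suc k. f i) = (\<Sum>i = 1..k. f i)"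
    by (rule sum.cong) auto
  with Suc show ?case by (simp add: algebra_simps)
qed simp

lemma Suc_choose_two_eq_sum: "Suc k choose 2 = (\<Sum>j = 1..k. j)"
  using gauss_sum_from_Suc_0[of k, where 'a = nat] by (simp add: choose_two algebra_simps)

lemma card_G_edges:
  assumes "\<forall>i. 1 \<le> i \<and> i \<le> k \<longrightarrow> 1 \<le> ns i"
    and "\<forall>i j. 1 \<le> i \<and> i \<le> j \<and> j \<le> k \<longrightarrow> ns i \<le> ns j"
  shows "card (G_edges k ns) + ((k + 1) choose 2) = k * (\<Sum>i = 1..k. ns i)"
proof -
  have "card (G_edges k ns) = (\<Sum>j = 1..k. card (layer_edges ns j))"
    unfolding G_edges_eq_UN_layer_edges[OF assms(2)]
  proof (rule card_UN_disjoint)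
    show "\<forall>j\<in>{1..k}. \<forall>j'\<in>{1..k}. j \<noteq> j' \<longrightarrow> layer_edges ns j \<inter> layer_edges ns j' = {}"
    proof (intro ballI impI equals0I)
      fix j j' e
      assume "j \<noteq> j'" and "e \<in> layer_edges ns j \<inter> layer_edges ns j'"
      then have "j \<le> j'" "j' \<le> j"
        using fst_layer_edges[of e ns j] fst_layer_edges[of e ns j'] by blast+
      with \<open>j \<noteq> j'\<close> show False by simp
    qed
  qed (simp_all add: finite_layer_edges)
  then have "card (G_edges k ns) + ((k + 1) choose 2) = (\<Sum>j = 1..k. card (layer_edges ns j) + j)"
    by (simp add: Suc_choose_two_eq_sum sum.distrib)
  also have "\<dots> = (\<Sum>j = 1..k. (\<Sum>i = 1..<j. ns i) + j * ns j)"
    using assms by (intro sum.cong card_layer_edges) auto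
  finally show ?thesis
    using sum_prefix_sums_plus_weighted[of ns k] by simp
qed

theorem lemma4:
  fixes k n :: nat and ns :: "nat \<Rightarrow> nat"
  assumes "1 \<le> k" and "k \<le> n"
    and "\<forall>i. 1 \<le> i \<and> i \<le> k \<longrightarrow> 1 \<le> ns i"
    and "\<forall>i j. 1 \<le> i \<and> i \<le> j \<and> j \<le> k \<longrightarrow> ns i \<le> ns j"
    and "(\<Sum>i = 1..k. ns i) = n"
  shows "int (card (G_edges k ns)) = int k * int n - int ((k + 1) choose 2)"
proof -
  have "card (G_edges k ns) + ((k + 1) choose 2) = k * n"
    using card_G_edges[OF assms(3,4)] assms(5) by simp
  then show ?thesis
    by (metis add_diff_cancel_right' of_nat_add of_nat_mult)
qed

end
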